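(* Let $G=(V,E,\{c_e\}_{e\in E})$ be a finite undirected graph with positive conductances and arbitrarily oriented edges. Let $h\in\mathbb{R}^V_{>0}$ and $w\in\mathbb{R}^E_{\ge0}$. Then $$\left(w^\top C^{1/2}|Bh|\right)^2\le\frac{\mathcal{I}(h)}{2}\sum_{x\in V}h(x)\sum_{e:\,x\in e}w_e^2,$$ where $|Bh|$ denotes the coordinatewise absolute value of $Bh$ and $$\mathcal{I}(h):=h^\top L\log h=\sum_{xy\in E}c_{xy}\big(h(x)-h(y)\big)\big(\log h(x)-\log h(y)\big),$$ with $\log h$ taken coordinatewise.
   Context: For a vertex $v$, $\mathbbm{1}_v\in\mathbb{R}^V$ is the standard basis vector. For an edge $e$ oriented from $e^-$ to $e^+$, $b_e:=\mathbbm{1}_{e^+}-\mathbbm{1}_{e^-}$; $B\in\mathbb{R}^{E\times V}$ is the matrix with row $b_e^\top$ for each $e$. $C=\operatorname{diag}(c_e)$, $L:=B^\top CB$. Graphs have no self-loops. *)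

theory Defs
  imports Main "HOL-Analysis.Analysis"
begin

text \<open>A finite graph: vertex set V, edge set E (edges are abstract objects, so
parallel edges are allowed); each edge e is oriented from src e (= e^-) to tgt e (= e^+).\<close>

definition graph_ok :: "'v set \<Rightarrow> 'e set \<Rightarrow> ('e \<Rightarrow> 'v) \<Rightarrow> ('e \<Rightarrow> 'v) \<Rightarrow> bool" where
  "graph_ok V E src tgt \<longleftrightarrow> finite V \<and> finite E \<and>
     (\<forall>e\<in>E. src e \<in> V \<and> tgt e \<in> V \<and> src e \<noteq> tgt e)"

definition incB :: "('e \<Rightarrow> 'v) \<Rightarrow> ('e \<Rightarrow> 'v) \<Rightarrow> ('v \<Rightarrow> real) \<Rightarrow> 'e \<Rightarrow> real" where
  "incB src tgt f e = f (tgt e) - f (src e)"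

definition entI :: "'e set \<Rightarrow> ('e \<Rightarrow> 'v) \<Rightarrow> ('e \<Rightarrow> 'v) \<Rightarrow> ('e \<Rightarrow> real) \<Rightarrow> ('v \<Rightarrow> real) \<Rightarrow> real" where
  "entI E src tgt c h = (\<Sum>e\<in>E. incB src tgt h e * c e * incB src tgt (\<lambda>x. ln (h x)) e)"

end

theory Submission
  imports Defs
begin

text \<open>Per edge, the squared gradient is dominated by the entropy production times the
arithmetic mean of the endpoint values: this is the inequality between the logarithmic and
the arithmetic mean, \<open>(a - b) / (ln a - ln b) \<le> (a + b) / 2\<close>. Writing each summand of the
left-hand side as a product of \<open>sqrt (c (h x - h y)(ln h x - ln h y))\<close> and
\<open>w sqrt ((h x + h y) / 2)\<close>, Cauchy-Schwarz gives the claim; regrouping the edge sum of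
\<open>w\<^sup>2 (h x + h y)\<close> by endpoints yields the vertex sum.\<close>

lemma ln_ge_two_mult_diff_div_add:
  fixes t :: real
  assumes "1 \<le> t"
  shows "2 * (t - 1) / (t + 1) \<le> ln t"
proof -
  let ?f = "\<lambda>x::real. ln x - 2 * (x - 1) / (x + 1)"
  have "?f 1 \<le> ?f t"
  proof (rule DERIV_nonneg_imp_increasing_open[OF assms])
    fix x :: real
    assume x: "1 < x" "x < t"
    have "DERIV ?f x :> 1 / x - 4 / (x + 1)\<^sup>2"
      using x by (auto intro!: derivative_eq_intros simp: power2_eq_square field_simps)
    moreover have "1 / x - 4 / (x + 1)\<^sup>2 = (x - 1)\<^sup>2 / (x * (x + 1)\<^sup>2)"
      using x by (simp add: divide_simps) (simp add: power2_eq_square algebra_simps)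
    ultimately show "\<exists>y. DERIV ?f x :> y \<and> 0 \<le> y"
      using x by auto
  qed (auto intro!: continuous_intros)
  then show ?thesis
    by simp
qed

lemma diff_squared_le_diff_mult_ln_diff_mult_mean:
  fixes a b :: real
  assumes "0 < a" "0 < b"
  shows "(a - b)\<^sup>2 \<le> (a - b) * (ln a - ln b) * ((a + b) / 2)"
proof -
  have ordered: "(a - b)\<^sup>2 \<le> (a - b) * (ln a - ln b) * ((a + b) / 2)"
    if "0 < b" "b \<le> a" for a b :: real
  proof -
    have "2 * (a / b - 1) / (a / b + 1) \<le> ln (a / b)"
      using that by (intro ln_ge_two_mult_diff_div_add) simp
    then have "2 * (a - b) / (a + b) \<le> ln a - ln b"
      using that by (simp add: ln_div divide_simps)
    then have "2 * (a - b) \<le> (ln a - ln b) * (a + b)"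
      using that by (simp add: field_simps)
    then have "(a - b) * (2 * (a - b)) \<le> (a - b) * ((ln a - ln b) * (a + b))"
      using that by (intro mult_left_mono) auto
    then show ?thesis
      by (simp add: power2_eq_square field_simps)
  qed
  show ?thesis
  proof (cases "b \<le> a")
    case True
    then show ?thesis
      using ordered assms by blast
  next
    case False
    then have "(b - a)\<^sup>2 \<le> (b - a) * (ln b - ln a) * ((b + a) / 2)"
      using ordered assms by auto
    then show ?thesis
      by (simp add: power2_eq_square algebra_simps)
  qed
qed

lemma diff_mult_ln_diff_nonneg:
  fixes a b :: real
  assumes "0 < a" "0 < b"
  shows "0 \<le> (a - b) * (ln a - ln b)"
  using assms by (cases "b \<le> a") (auto intro: mult_nonneg_nonneg mult_nonpos_nonpos)

lemma square_sum_le_sum_mult_sum: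
  fixes w x y z :: "'i \<Rightarrow> real"
  assumes "\<And>i. i \<in> I \<Longrightarrow> 0 \<le> w i \<and> 0 \<le> x i \<and> 0 \<le> y i \<and> 0 \<le> z i"
    and "\<And>i. i \<in> I \<Longrightarrow> (x i)\<^sup>2 \<le> y i * z i"
  shows "(\<Sum>i\<in>I. w i * x i)\<^sup>2 \<le> (\<Sum>i\<in>I. y i) * (\<Sum>i\<in>I. (w i)\<^sup>2 * z i)"
proof -
  have "w i * x i \<le> sqrt (y i) * (w i * sqrt (z i))" if "i \<in> I" for i
  proof -
    have "x i \<le> sqrt (y i * z i)"
      using assms[OF that] by (metis real_le_rsqrt)
    then show ?thesis
      using assms(1)[OF that] by (simp add: real_sqrt_mult mult_left_mono algebra_simps)
  qed
  then have "(\<Sum>i\<in>I. w i * x i)\<^sup>2 \<le> (\<Sum>i\<in>I. sqrt (y i) * (w i * sqrt (z i)))\<^sup>2"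
    using assms(1) by (intro power_mono sum_mono sum_nonneg) auto
  also have "\<dots> \<le> (\<Sum>i\<in>I. (sqrt (y i))\<^sup>2) * (\<Sum>i\<in>I. (w i * sqrt (z i))\<^sup>2)"
    by (rule Cauchy_Schwarz_ineq_sum)
  also have "\<dots> = (\<Sum>i\<in>I. y i) * (\<Sum>i\<in>I. (w i)\<^sup>2 * z i)"
    using assms(1) by (simp add: power_mult_distrib)
  finally show ?thesis .
qed

lemma sum_vertices_incident_edges:
  fixes h :: "'v \<Rightarrow> 'a::comm_semiring_1" and f :: "'e \<Rightarrow> 'a"
  assumes "graph_ok V E src tgt"
  shows "(\<Sum>x\<in>V. h x * (\<Sum>e\<in>{e\<in>E. x = src e \<or> x = tgt e}. f e))
       = (\<Sum>e\<in>E. (h (src e) + h (tgt e)) * f e)"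
proof -
  have fin: "finite V" "finite E"
    using assms unfolding graph_ok_def by auto
  have "(\<Sum>x\<in>V. h x * (\<Sum>e\<in>{e\<in>E. x = src e \<or> x = tgt e}. f e))
      = (\<Sum>x\<in>V. \<Sum>e\<in>E. if x = src e \<or> x = tgt e then h x * f e else 0)"
    using fin by (simp add: sum_distrib_left sum.If_cases Int_def conj_commute)
  also have "\<dots> = (\<Sum>e\<in>E. \<Sum>x\<in>V. if x = src e \<or> x = tgt e then h x * f e else 0)"
    by (rule sum.swap)
  also have "\<dots> = (\<Sum>e\<in>E. (h (src e) + h (tgt e)) * f e)"
  proof (rule sum.cong)
    fix e
    assume "e \<in> E"
    then have ends: "{x\<in>V. x = src e \<or> x = tgt e} = {src e, tgt e}" "src e \<noteq> tgt e"
      using assms unfolding graph_ok_def by auto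
    have "(\<Sum>x\<in>V. if x = src e \<or> x = tgt e then h x * f e else 0)
        = (\<Sum>x\<in>{x\<in>V. x = src e \<or> x = tgt e}. h x * f e)"
      using fin by (simp add: sum.If_cases Int_def)
    then show "(\<Sum>x\<in>V. if x = src e \<or> x = tgt e then h x * f e else 0)
        = (h (src e) + h (tgt e)) * f e"
      using ends by (simp add: distrib_right)
  qed simp
  finally show ?thesis .
qed

theorem lemma3p1:
  fixes V :: "'v set" and E :: "'e set" and src tgt :: "'e \<Rightarrow> 'v"
    and c :: "'e \<Rightarrow> real" and h :: "'v \<Rightarrow> real" and w :: "'e \<Rightarrow> real"
  assumes "graph_ok V E src tgt"
    and "\<forall>e\<in>E. c e > 0"
    and "\<forall>x\<in>V. h x > 0"
    and "\<forall>e\<in>E. w e \<ge> 0"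
  shows "(\<Sum>e\<in>E. w e * (sqrt (c e) * \<bar>incB src tgt h e\<bar>))\<^sup>2
         \<le> entI E src tgt c h / 2 *
            (\<Sum>x\<in>V. h x * (\<Sum>e\<in>{e\<in>E. x = src e \<or> x = tgt e}. (w e)\<^sup>2))"
proof -
  define d where "d = incB src tgt h"
  define l where "l = incB src tgt (\<lambda>x. ln (h x))"
  define s where "s e = h (src e) + h (tgt e)" for e
  have edge: "0 \<le> d e * l e \<and> (d e)\<^sup>2 \<le> d e * l e * (s e / 2) \<and> 0 < s e" if "e \<in> E" for e
  proof -
    have "0 < h (src e)" "0 < h (tgt e)"
      using assms(1,3) that unfolding graph_ok_def by auto
    then show ?thesis
      using diff_squared_le_diff_mult_ln_diff_mult_mean[of "h (tgt e)" "h (src e)"]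
        diff_mult_ln_diff_nonneg[of "h (tgt e)" "h (src e)"]
      unfolding d_def l_def s_def incB_def by (simp add: add.commute)
  qed
  have "(\<Sum>e\<in>E. w e * (sqrt (c e) * \<bar>d e\<bar>))\<^sup>2
      \<le> (\<Sum>e\<in>E. c e * (d e * l e)) * (\<Sum>e\<in>E. (w e)\<^sup>2 * (s e / 2))"
  proof (rule square_sum_le_sum_mult_sum)
    fix e
    assume e: "e \<in> E"
    with edge[OF e] assms(2,4)
    show "0 \<le> w e \<and> 0 \<le> sqrt (c e) * \<bar>d e\<bar> \<and> 0 \<le> c e * (d e * l e) \<and> 0 \<le> s e / 2"
      by auto
    have "0 < c e"
      using assms(2) e by blast
    with edge[OF e] show "(sqrt (c e) * \<bar>d e\<bar>)\<^sup>2 \<le> c e * (d e * l e) * (s e / 2)"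
      by (simp add: power_mult_distrib mult.assoc mult_left_mono)
  qed
  also have "(\<Sum>e\<in>E. c e * (d e * l e)) = entI E src tgt c h"
    unfolding entI_def d_def l_def by (simp add: ac_simps)
  also have "(\<Sum>e\<in>E. (w e)\<^sup>2 * (s e / 2))
      = (\<Sum>x\<in>V. h x * (\<Sum>e\<in>{e\<in>E. x = src e \<or> x = tgt e}. (w e)\<^sup>2)) / 2"
    unfolding sum_vertices_incident_edges[OF assms(1)] s_def
    by (simp add: sum_divide_distrib ac_simps)
  finally show ?thesis
    unfolding d_def by simp
qed

end
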